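(* Let $\pi_1,\dots,\pi_n>0$ with $\sum_i\pi_i=1$ and $\pi_*=\min_i\pi_i$. For every $\epsilon\in(0,1)$ there exist $m\in\mathbb{N}$ and a univariate polynomial $p\in\mathbb{R}[t]$ such that (i) $p(t)\ge 2t^2\,\overline{r_m}(t)$ for all $t\in[0,\pi_*^{-1/2}]$, and (ii) $\sum_{i=1}^n\pi_i\,p(x_i)\le(1+\epsilon)\,\mathrm{Ent}_\pi[x^2]$ for all $x\in S^\pi$.
   Context: $\|x\|_\pi^2=\sum_i\pi_ix_i^2$, $\mathrm{Ent}_\pi[x^2]=\sum_i\pi_ix_i^2\log(x_i^2/\|x\|_\pi^2)$, and $S^\pi=\{x\in\mathbb{R}^n_{\ge0}:\|x\|_\pi^2=1\}$. For $m\ge0$, $\overline{r_m}(t)$ is the $(m+1,m)$ Padé approximant of $\log t$ at $t=1$: the rational function $R/S$ with $\deg R\le m+1$, $\deg S\le m$, $S(1)=1$ and $\log t-R(t)/S(t)=O((t-1)^{2m+2})$ as $t\to 1$. (Its denominator is positive on $(0,\infty)$ and $\overline{r_m}(t)\ge\log t$ for $t>0$.) *)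

theory Defs
  imports "HOL-Analysis.Analysis" "HOL-Computational_Algebra.Polynomial" "HOL-Library.Landau_Symbols"
begin

text \<open>It is R/S with deg R \<le> m+1, deg S \<le> m, S(1) = 1,
  and ln t - R t / S t = O((t-1)^(2m+2)) as t \<rightarrow> 1.  The denominator is
  nonzero on (0,\<infinity>), which makes the function uniquely determined there.\<close>
definition pade_log :: "nat \<Rightarrow> real \<Rightarrow> real" where
  "pade_log m = (THE f. \<exists>R S :: real poly.
      degree R \<le> m + 1 \<and> degree S \<le> m \<and> poly S 1 = 1 \<and>
      (\<forall>t>0. poly S t \<noteq> 0) \<and>
      (\<lambda>t. ln t - poly R t / poly S t) \<in> O[at 1](\<lambda>t. (t - 1) ^ (2 * m + 2)) \<and>
      f = (\<lambda>t. if t > 0 then poly R t / poly S t else 0))"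

definition pi_norm2 :: "nat \<Rightarrow> (nat \<Rightarrow> real) \<Rightarrow> (nat \<Rightarrow> real) \<Rightarrow> real" where
  "pi_norm2 n \<pi> x = (\<Sum>i<n. \<pi> i * (x i)\<^sup>2)"

definition ent_sq :: "nat \<Rightarrow> (nat \<Rightarrow> real) \<Rightarrow> (nat \<Rightarrow> real) \<Rightarrow> real" where
  "ent_sq n \<pi> x = (\<Sum>i<n. \<pi> i * (x i)\<^sup>2 * ln ((x i)\<^sup>2 / pi_norm2 n \<pi> x))"

definition pi_sphere :: "nat \<Rightarrow> (nat \<Rightarrow> real) \<Rightarrow> (nat \<Rightarrow> real) set" where
  "pi_sphere n \<pi> = {x. (\<forall>i<n. x i \<ge> 0) \<and> pi_norm2 n \<pi> x = 1}"

end

theory Submission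
  imports Defs
begin

text \<open>
  The (m+1,m) Pade approximant of the logarithm at 1 is explicit: its denominator is
  S(t) = sum_l C(m,l) C(m+1,l) t^l and its numerator R is the Taylor polynomial of degree
  m+1 of S(t) ln t at 1, because the (m+2)-nd derivative of S(t) ln t is the single term
  -(m+1)! (t-1)^m / t^(m+2). Cauchy's form of the Taylor remainder then bounds
  |S(t) ln t - R(t)| by (sqrt t - 1)^(2m) |t - \<xi>| |t - 1| / \<xi>^2, which gives
  t^2 (R/S - ln t) \<le> (M^2/m) (t-1)^2 on (0,M] for M = 1 / sqrt (min \<pi>).

  Next, ln t is majorised on (0,M] by a polynomial T with 2 t^2 (T - ln t) \<le> (64 M^4/j) (t-1)^2:
  write ln t = ln M + ln (1 - v) with v = 1 - t/M, expand -ln (1 - v) to order 2j+1 and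
  replace the remainder by its tangent at the point v corresponding to t = 1.

  For m and j large, p(t) = 2 t^2 T(t) + (\<epsilon>/2)(t-1)^2 lies above 2 t^2 R/S, and below
  (1+\<epsilon>) t^2 ln t^2 + \<epsilon> (1 - t^2) because (t-1)^2 \<le> t^2 ln t^2 + 1 - t^2. Every coordinate of
  a point of the \<pi>-sphere is at most M, and summing the second bound against \<pi> gives
  (1+\<epsilon>) Ent.
\<close>

section \<open>Taylor expansion with Cauchy remainder\<close>

lemma has_real_derivative_taylor_sum:
  fixes D :: "nat \<Rightarrow> real \<Rightarrow> real"
  assumes "\<And>k. k \<le> n \<Longrightarrow> (D k has_real_derivative D (Suc k) s) (at s)"
  shows "((\<lambda>y. \<Sum>k\<le>n. D k y * (t - y)^k / fact k) has_real_derivative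
            D (Suc n) s * (t - s)^n / fact n) (at s)"
  using assms
proof (induction n)
  case 0
  then show ?case by simp
next
  case (Suc n)
  have IH: "((\<lambda>y. \<Sum>k\<le>n. D k y * (t - y)^k / fact k) has_real_derivative
            D (Suc n) s * (t - s)^n / fact n) (at s)"
    using Suc by simp
  have d: "(D (Suc n) has_real_derivative D (Suc (Suc n)) s) (at s)"
    using Suc.prems by simp
  have "((\<lambda>y. D (Suc n) y * (t - y)^(Suc n) / fact (Suc n)) has_real_derivative
      (D (Suc (Suc n)) s * (t - s)^(Suc n) - D (Suc n) s * (real (Suc n) * (t - s)^n))
        / fact (Suc n)) (at s)"
  proof -
    have "((\<lambda>y. (t - y)^(Suc n)) has_real_derivative (1 + real n) * (-1 * (t - s)^n)) (at s)"
      by (rule DERIV_power_Suc) (auto intro!: derivative_eq_intros)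
    from DERIV_cdivide[OF DERIV_mult[OF d this], of "fact (Suc n)"] show ?thesis
      by (simp add: algebra_simps del: fact_Suc)
  qed
  from DERIV_add[OF IH this]
  have "((\<lambda>y. \<Sum>k\<le>Suc n. D k y * (t - y)^k / fact k) has_real_derivative
      D (Suc n) s * (t - s)^n / fact n +
        (D (Suc (Suc n)) s * (t - s)^(Suc n) - D (Suc n) s * (real (Suc n) * (t - s)^n))
          / fact (Suc n)) (at s)"
    by simp
  moreover have "D (Suc n) s * (t - s)^n / fact n +
        (D (Suc (Suc n)) s * (t - s)^(Suc n) - D (Suc n) s * (real (Suc n) * (t - s)^n))
          / fact (Suc n) = D (Suc (Suc n)) s * (t - s)^(Suc n) / fact (Suc n)"
    by (simp add: field_simps del: fact_Suc) (simp add: algebra_simps)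
  ultimately show ?case by simp
qed

text \<open>Unlike the Lagrange form, this remainder yields bounds for the Pade approximant
  that stay uniform as t tends to 0 (see between_gap_product_le).\<close>

theorem Taylor_Cauchy_remainder:
  fixes D :: "nat \<Rightarrow> real \<Rightarrow> real"
  assumes der: "\<And>k x. k \<le> n \<Longrightarrow> min c t \<le> x \<Longrightarrow> x \<le> max c t \<Longrightarrow>
                    (D k has_real_derivative D (Suc k) x) (at x)"
    and "c \<noteq> t"
  shows "\<exists>\<xi>. min c t < \<xi> \<and> \<xi> < max c t \<and>
     D 0 t = (\<Sum>k\<le>n. D k c * (t - c)^k / fact k) + D (Suc n) \<xi> * (t - \<xi>)^n * (t - c) / fact n"
proof -
  define g where "g = (\<lambda>y. \<Sum>k\<le>n. D k y * (t - y)^k / fact k)"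
  have g': "(g has_real_derivative D (Suc n) x * (t - x)^n / fact n) (at x)"
    if "min c t \<le> x" "x \<le> max c t" for x
    unfolding g_def by (rule has_real_derivative_taylor_sum) (use der that in auto)
  have "\<exists>\<xi>. min c t < \<xi> \<and> \<xi> < max c t \<and>
      g (max c t) - g (min c t) = (max c t - min c t) * (D (Suc n) \<xi> * (t - \<xi>)^n / fact n)"
    by (rule MVT2) (use \<open>c \<noteq> t\<close> g' in auto)
  then obtain \<xi> where \<xi>: "min c t < \<xi>" "\<xi> < max c t"
    and mvt: "g (max c t) - g (min c t) = (max c t - min c t) * (D (Suc n) \<xi> * (t - \<xi>)^n / fact n)"
    by blast
  define K where "K = D (Suc n) \<xi> * (t - \<xi>)^n / fact n"
  have "g t - g c = (t - c) * K"
    using mvt unfolding K_def[symmetric]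
    by (cases "c < t") (auto simp: min_def max_def algebra_simps split: if_splits)
  moreover have "g t = D 0 t"
    unfolding g_def by (simp add: zero_power)
  ultimately show ?thesis
    using \<xi> unfolding g_def K_def by (auto simp: algebra_simps)
qed

section \<open>An explicit Pade approximant of the logarithm\<close>

definition pow_ln_deriv :: "nat \<Rightarrow> nat \<Rightarrow> real \<Rightarrow> real" where
  "pow_ln_deriv l k x =
     (if k \<le> l then fact l / fact (l - k) * x^(l - k) * (ln x + harm l - harm (l - k))
      else (-1)^(k - l - 1) * fact l * fact (k - l - 1) / x^(k - l))"

lemma pow_ln_deriv_0: "pow_ln_deriv l 0 x = x^l * ln x"
  by (simp add: pow_ln_deriv_def)

lemma has_real_derivative_pow_ln_deriv_less:
  assumes "x > 0" "k < l"
  shows "(pow_ln_deriv l k has_real_derivative pow_ln_deriv l (Suc k) x) (at x)"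
proof -
  obtain j where j: "l - k = Suc j"
    using assms(2) by (metis Suc_diff_Suc)
  define C where "C = (fact l / fact (Suc j) :: real)"
  have eq: "pow_ln_deriv l k = (\<lambda>y. C * y^(Suc j) * (ln y + harm l - harm (Suc j)))"
    using assms(2) j by (auto simp: pow_ln_deriv_def C_def)
  have "(pow_ln_deriv l k has_real_derivative
      C * (real (Suc j) * x^j) * (ln x + harm l - harm (Suc j)) + C * x^(Suc j) * (1 / x)) (at x)"
  proof -
    have "((\<lambda>y. y^(Suc j)) has_real_derivative real (Suc j) * x^j) (at x)"
      using DERIV_pow[of "Suc j" x] by simp
    then show ?thesis
      unfolding eq using assms(1) by (auto intro!: derivative_eq_intros simp del: power_Suc of_nat_Suc)
  qed
  moreover have "C * (real (Suc j) * x^j) * (ln x + harm l - harm (Suc j)) + C * x^(Suc j) * (1 / x)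
      = fact l / fact j * x^j * (ln x + harm l - harm j)"
  proof -
    define F where "F = (fact l / fact j :: real)"
    define A where "A = ln x + harm l - harm j"
    have e1: "C * (real (Suc j) * x^j) * (ln x + harm l - harm (Suc j))
        = (C * real (Suc j)) * x^j * (A - 1 / real (Suc j))"
      unfolding A_def harm_Suc by (simp add: algebra_simps inverse_eq_divide)
    have e2: "C * real (Suc j) = F" and e3: "C * x^(Suc j) * (1 / x) = F * x^j / real (Suc j)"
      using assms(1) by (simp_all add: C_def F_def)
    have "C * (real (Suc j) * x^j) * (ln x + harm l - harm (Suc j)) + C * x^(Suc j) * (1 / x)
        = F * x^j * (A - 1 / real (Suc j)) + F * x^j / real (Suc j)"
      by (simp only: e1 e2 e3)
    also have "\<dots> = F * x^j * A"
      by (simp add: right_diff_distrib)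
    finally show ?thesis unfolding F_def A_def .
  qed
  moreover have "pow_ln_deriv l (Suc k) x = fact l / fact j * x^j * (ln x + harm l - harm j)"
    using assms(2) j by (simp add: pow_ln_deriv_def flip: Suc_diff_Suc)
  ultimately show ?thesis by simp
qed

lemma has_real_derivative_pow_ln_deriv:
  assumes "x > 0"
  shows "(pow_ln_deriv l k has_real_derivative pow_ln_deriv l (Suc k) x) (at x)"
proof (cases "k < l")
  case True
  then show ?thesis
    using has_real_derivative_pow_ln_deriv_less assms by blast
next
  case False
  show ?thesis
  proof (cases "k = l")
    case True
    have "pow_ln_deriv l k = (\<lambda>y. fact l * (ln y + harm l))"
      using True by (auto simp: pow_ln_deriv_def harm_def)
    moreover have "pow_ln_deriv l (Suc k) x = fact l * (1 / x)"
      using True by (simp add: pow_ln_deriv_def)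
    moreover have "((\<lambda>y. fact l * (ln y + harm l)) has_real_derivative fact l * (1 / x)) (at x)"
      using assms by (auto intro!: derivative_eq_intros)
    ultimately show ?thesis by simp
  next
    case greater: False
    define j where "j = k - l - 1"
    have j: "k - l = Suc j"
      using False greater unfolding j_def by simp
    then have "\<not> Suc k \<le> l" by simp
    define C where "C = ((-1)^j * fact l * fact j :: real)"
    have "pow_ln_deriv l k = (\<lambda>y. C / y^(Suc j))"
      using False greater j by (auto simp: pow_ln_deriv_def C_def j_def)
    moreover have "pow_ln_deriv l (Suc k) x = - C * real (Suc j) / x^(Suc (Suc j))"
      using j \<open>\<not> Suc k \<le> l\<close> by (simp add: pow_ln_deriv_def C_def Suc_diff_le)
    moreover have "((\<lambda>y. C / y^(Suc j)) has_real_derivative - C * real (Suc j) / x^(Suc (Suc j))) (at x)"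
      using assms by (auto intro!: derivative_eq_intros simp: field_simps) (cases j; simp)
    ultimately show ?thesis by simp
  qed
qed

definition pade_den :: "nat \<Rightarrow> real poly" where
  "pade_den m = (\<Sum>l\<le>m. monom (real (m choose l) * real (Suc m choose l)) l)"

definition den_ln_deriv :: "nat \<Rightarrow> nat \<Rightarrow> real \<Rightarrow> real" where
  "den_ln_deriv m k x = (\<Sum>l\<le>m. real (m choose l) * real (Suc m choose l) * pow_ln_deriv l k x)"

definition pade_num :: "nat \<Rightarrow> real poly" where
  "pade_num m = (\<Sum>k\<le>Suc m. smult (den_ln_deriv m k 1 / fact k) ([:-1, 1:]^k))"

lemma poly_pade_den:
  "poly (pade_den m) x = (\<Sum>l\<le>m. real (m choose l) * real (Suc m choose l) * x^l)"
  by (simp add: pade_den_def poly_sum poly_monom)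

lemma poly_pade_num: "poly (pade_num m) x = (\<Sum>k\<le>Suc m. den_ln_deriv m k 1 * (x - 1)^k / fact k)"
  unfolding pade_num_def poly_sum by (intro sum.cong refl) (simp add: poly_power)

lemma degree_pade_den: "degree (pade_den m) \<le> m"
  unfolding pade_den_def by (rule degree_sum_le) (auto intro: order_trans[OF degree_monom_le])

lemma degree_pade_num: "degree (pade_num m) \<le> m + 1"
  unfolding pade_num_def
proof (rule degree_sum_le)
  fix k assume "k \<in> {..Suc m}"
  have "degree (smult (den_ln_deriv m k 1 / fact k) ([:-1, 1:]^k)) \<le> degree [:-1, 1::real:] * k"
    by (rule order_trans[OF degree_smult_le degree_power_le])
  with \<open>k \<in> {..Suc m}\<close> show "degree (smult (den_ln_deriv m k 1 / fact k) ([:-1, 1:]^k)) \<le> m + 1"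
    by simp
qed simp

lemma pade_den_ge_one: "0 \<le> t \<Longrightarrow> 1 \<le> poly (pade_den m) t"
  unfolding poly_pade_den
  by (subst sum.remove[of _ 0]) (auto intro!: sum_nonneg)

lemma pade_den_ge_leading: "0 \<le> t \<Longrightarrow> (real m + 1) * t^m \<le> poly (pade_den m) t"
  unfolding poly_pade_den
  by (subst sum.remove[of _ m]) (auto intro!: sum_nonneg simp: algebra_simps)

lemma den_ln_deriv_0: "den_ln_deriv m 0 x = poly (pade_den m) x * ln x"
  by (simp add: den_ln_deriv_def poly_pade_den pow_ln_deriv_0 sum_distrib_right mult.assoc)

lemma has_real_derivative_den_ln_deriv:
  "x > 0 \<Longrightarrow> (den_ln_deriv m k has_real_derivative den_ln_deriv m (Suc k) x) (at x)"
  unfolding den_ln_deriv_def[abs_def]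
  by (auto intro!: derivative_eq_intros has_real_derivative_pow_ln_deriv simp: den_ln_deriv_def ac_simps)

lemma poly_pade_num_1: "poly (pade_num m) 1 = 0"
  by (simp add: poly_pade_num zero_power den_ln_deriv_0)

text \<open>This is where the coefficients C(m,l) C(m+1,l) of the denominator are needed: by the
  binomial theorem the (m+2)-nd derivative of S(x) ln x collapses to a single term.\<close>

lemma den_ln_deriv_top:
  assumes "x > 0"
  shows "den_ln_deriv m (Suc (Suc m)) x = - fact (Suc m) * (x - 1)^m / x^(Suc (Suc m))"
proof -
  have summand: "real (m choose l) * real (Suc m choose l) * pow_ln_deriv l (Suc (Suc m)) x
      = - fact (Suc m) / x^(Suc (Suc m)) * (real (m choose l) * x^l * (-1)^(m - l))"
    if "l \<le> m" for l
  proof -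
    have "real (Suc m choose l) * (fact l * fact (Suc m - l)) = fact (Suc m)"
      using that by (simp add: binomial_fact del: fact_Suc)
    moreover have "x^(Suc (Suc m) - l) * x^l = x^(Suc (Suc m))"
      using that by (simp flip: power_add)
    moreover have "(-1::real)^(Suc m - l) = - ((-1)^(m - l))"
      using that by (simp add: Suc_diff_le)
    ultimately show ?thesis
      using that assms unfolding pow_ln_deriv_def
      by (simp add: field_simps Suc_diff_le del: fact_Suc)
  qed
  have "den_ln_deriv m (Suc (Suc m)) x
      = - fact (Suc m) / x^(Suc (Suc m)) * (\<Sum>l\<le>m. real (m choose l) * x^l * (-1)^(m - l))"
    unfolding den_ln_deriv_def sum_distrib_left by (intro sum.cong refl) (simp add: summand)
  also have "\<dots> = - fact (Suc m) * (x - 1)^m / x^(Suc (Suc m))"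
    using binomial_ring[of x "-1" m] by simp
  finally show ?thesis .
qed

lemma pade_error_eq:
  assumes "t > 0" "t \<noteq> 1"
  obtains \<xi> where "min 1 t < \<xi>" "\<xi> < max 1 t"
    "poly (pade_den m) t * ln t - poly (pade_num m) t
       = - ((\<xi> - 1)^m * (t - \<xi>)^(Suc m) * (t - 1) / \<xi>^(Suc (Suc m)))"
proof -
  have der: "(den_ln_deriv m k has_real_derivative den_ln_deriv m (Suc k) x) (at x)"
    if "k \<le> Suc m" "min 1 t \<le> x" "x \<le> max 1 t" for k x
    using that assms by (intro has_real_derivative_den_ln_deriv) (auto simp: min_def split: if_splits)
  then obtain \<xi> where \<xi>: "min 1 t < \<xi>" "\<xi> < max 1 t"
    and taylor: "den_ln_deriv m 0 t = (\<Sum>k\<le>Suc m. den_ln_deriv m k 1 * (t - 1)^k / fact k)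
        + den_ln_deriv m (Suc (Suc m)) \<xi> * (t - \<xi>)^(Suc m) * (t - 1) / fact (Suc m)"
    using Taylor_Cauchy_remainder[of "Suc m" 1 t "den_ln_deriv m", OF der] assms(2) by auto
  have "\<xi> > 0"
    using \<xi> assms by (auto simp: min_def split: if_splits)
  have "poly (pade_den m) t * ln t - poly (pade_num m) t
      = den_ln_deriv m (Suc (Suc m)) \<xi> * (t - \<xi>)^(Suc m) * (t - 1) / fact (Suc m)"
    using taylor by (simp add: den_ln_deriv_0 poly_pade_num)
  also have "\<dots> = - ((\<xi> - 1)^m * (t - \<xi>)^(Suc m) * (t - 1) / \<xi>^(Suc (Suc m)))"
    by (simp add: den_ln_deriv_top[OF \<open>\<xi> > 0\<close>] del: fact_Suc)
  finally show ?thesis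
    using \<xi> that by blast
qed

text \<open>The difference of the two sides is (\<xi> - sqrt t)^2.\<close>

lemma between_gap_product_le:
  fixes t \<xi> :: real
  assumes "min 1 t < \<xi>" "\<xi> < max 1 t" "t > 0"
  shows "\<bar>\<xi> - 1\<bar> * \<bar>t - \<xi>\<bar> \<le> \<xi> * (sqrt t - 1)^2"
proof -
  have "\<bar>\<xi> - 1\<bar> * \<bar>t - \<xi>\<bar> = (1 - \<xi>) * (\<xi> - t)"
    using assms(1,2) by (cases "t < 1") (auto simp: min_def max_def abs_if algebra_simps)
  moreover have "\<xi> * (sqrt t - 1)^2 - (1 - \<xi>) * (\<xi> - t) = (\<xi> - sqrt t)^2"
    using assms(3) by (simp add: power2_eq_square algebra_simps)
  ultimately show ?thesis
    by (metis diff_ge_0_iff_ge zero_le_power2)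
qed

lemma pade_error_bound:
  assumes "t > 0" "t \<noteq> 1"
  obtains \<xi> where "min 1 t < \<xi>" "\<xi> < max 1 t"
    "\<bar>poly (pade_den m) t * ln t - poly (pade_num m) t\<bar>
       \<le> (sqrt t - 1)^(2 * m) * (\<bar>t - \<xi>\<bar> * \<bar>t - 1\<bar> / \<xi>^2)"
proof -
  obtain \<xi> where \<xi>: "min 1 t < \<xi>" "\<xi> < max 1 t"
    and err: "poly (pade_den m) t * ln t - poly (pade_num m) t
       = - ((\<xi> - 1)^m * (t - \<xi>)^(Suc m) * (t - 1) / \<xi>^(Suc (Suc m)))"
    using pade_error_eq[OF assms] by blast
  have "\<xi> > 0"
    using \<xi> assms by (auto simp: min_def split: if_splits)
  have "\<bar>poly (pade_den m) t * ln t - poly (pade_num m) t\<bar>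
      = (\<bar>\<xi> - 1\<bar> * \<bar>t - \<xi>\<bar> / \<xi>)^m * (\<bar>t - \<xi>\<bar> * \<bar>t - 1\<bar> / \<xi>^2)"
  proof -
    have "\<bar>- ((\<xi> - 1)^m * (t - \<xi>)^(Suc m) * (t - 1) / \<xi>^(Suc (Suc m)))\<bar>
        = \<bar>\<xi> - 1\<bar>^m * \<bar>t - \<xi>\<bar>^m * \<bar>t - \<xi>\<bar> * \<bar>t - 1\<bar> / (\<xi>^m * \<xi>^2)"
      using \<open>\<xi> > 0\<close> by (simp add: abs_mult abs_divide power_abs power2_eq_square ac_simps)
    then show ?thesis
      unfolding err by (simp add: power_mult_distrib power_divide)
  qed
  also have "\<dots> \<le> ((sqrt t - 1)^2)^m * (\<bar>t - \<xi>\<bar> * \<bar>t - 1\<bar> / \<xi>^2)"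
  proof (rule mult_right_mono)
    show "(\<bar>\<xi> - 1\<bar> * \<bar>t - \<xi>\<bar> / \<xi>)^m \<le> ((sqrt t - 1)^2)^m"
      using between_gap_product_le[OF \<xi> \<open>t > 0\<close>] \<open>\<xi> > 0\<close>
      by (intro power_mono) (auto simp: divide_le_eq mult.commute)
  qed simp
  finally show ?thesis
    by (intro that[OF \<xi>]) (simp only: power_mult)
qed

lemma pade_error_near_one:
  assumes "\<bar>t - 1\<bar> < 1/2" "t \<noteq> 1"
  shows "\<bar>ln t - poly (pade_num m) t / poly (pade_den m) t\<bar> \<le> 2^(m + 2) * \<bar>t - 1\<bar>^(2 * m + 2)"
proof -
  have "t > 0"
    using assms by (auto simp: abs_if split: if_splits)
  obtain \<xi> where \<xi>: "min 1 t < \<xi>" "\<xi> < max 1 t"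
    and err: "poly (pade_den m) t * ln t - poly (pade_num m) t
       = - ((\<xi> - 1)^m * (t - \<xi>)^(Suc m) * (t - 1) / \<xi>^(Suc (Suc m)))"
    using pade_error_eq[OF \<open>t > 0\<close> assms(2)] by blast
  have "1/2 < \<xi>" and "\<bar>\<xi> - 1\<bar> \<le> \<bar>t - 1\<bar>" and "\<bar>t - \<xi>\<bar> \<le> \<bar>t - 1\<bar>"
    using \<xi> assms(1) by (auto simp: min_def max_def abs_if split: if_splits)
  have S: "1 \<le> poly (pade_den m) t"
    using \<open>t > 0\<close> by (simp add: pade_den_ge_one)
  have "\<bar>ln t - poly (pade_num m) t / poly (pade_den m) t\<bar>
      = \<bar>poly (pade_den m) t * ln t - poly (pade_num m) t\<bar> / poly (pade_den m) t"
    using S by (simp add: field_simps abs_divide)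
  also have "\<dots> \<le> \<bar>poly (pade_den m) t * ln t - poly (pade_num m) t\<bar>"
    using S by (simp add: divide_le_eq mult_le_cancel_left1)
  also have "\<dots> = \<bar>\<xi> - 1\<bar>^m * \<bar>t - \<xi>\<bar>^(Suc m) * \<bar>t - 1\<bar> / \<xi>^(Suc (Suc m))"
    unfolding err using \<open>1/2 < \<xi>\<close> by (simp add: abs_mult abs_divide power_abs)
  also have "\<dots> \<le> \<bar>t - 1\<bar>^m * \<bar>t - 1\<bar>^(Suc m) * \<bar>t - 1\<bar> / (1/2)^(Suc (Suc m))"
    using \<open>1/2 < \<xi>\<close> \<open>\<bar>\<xi> - 1\<bar> \<le> \<bar>t - 1\<bar>\<close> \<open>\<bar>t - \<xi>\<bar> \<le> \<bar>t - 1\<bar>\<close>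
    by (intro frac_le mult_mono power_mono) auto
  also have "\<dots> = 2^(m + 2) * \<bar>t - 1\<bar>^(2 * m + 2)"
  proof -
    have "\<bar>t - 1\<bar>^m * \<bar>t - 1\<bar>^(Suc m) * \<bar>t - 1\<bar> = \<bar>t - 1\<bar>^(m + Suc m + 1)"
      by (simp only: power_add power_one_right)
    also have "m + Suc m + 1 = 2 * m + 2"
      by simp
    finally show ?thesis
      by (simp add: power_one_over)
  qed
  finally show ?thesis .
qed

lemma pade_approximation_bigo:
  "(\<lambda>t. ln t - poly (pade_num m) t / poly (pade_den m) t) \<in> O[at 1](\<lambda>t. (t - 1)^(2 * m + 2))"
proof (rule landau_o.bigI[where c = "2^(m + 2)"])
  have "eventually (\<lambda>t. t \<noteq> 1 \<and> \<bar>t - 1\<bar> < 1/2) (at (1::real))"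
    unfolding eventually_at by (rule exI[of _ "1/2"]) (auto simp: dist_real_def)
  then show "eventually (\<lambda>t. norm (ln t - poly (pade_num m) t / poly (pade_den m) t)
      \<le> 2^(m + 2) * norm ((t - 1)^(2 * m + 2))) (at 1)"
  proof (rule eventually_mono)
    fix t :: real
    assume "t \<noteq> 1 \<and> \<bar>t - 1\<bar> < 1/2"
    then show "norm (ln t - poly (pade_num m) t / poly (pade_den m) t)
        \<le> 2^(m + 2) * norm ((t - 1)^(2 * m + 2))"
      unfolding real_norm_def power_abs by (intro pade_error_near_one) auto
  qed
qed simp

lemma poly_eq_0_if_bigo_power:
  fixes P :: "real poly"
  assumes "degree P \<le> N" and "(\<lambda>t. poly P t) \<in> O[at a](\<lambda>t. (t - a)^(Suc N))"
  shows "P = 0"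
proof (rule ccontr)
  assume "P \<noteq> 0"
  define k where "k = order a P"
  obtain Q where P: "P = [:-a, 1:]^k * Q" and "\<not> [:-a, 1:] dvd Q"
    using order_decomp[OF \<open>P \<noteq> 0\<close>] unfolding k_def by blast
  have "k \<le> N"
    using order_degree[OF \<open>P \<noteq> 0\<close>, of a] assms(1) unfolding k_def by simp
  have "poly Q a \<noteq> 0"
    using \<open>\<not> [:-a, 1:] dvd Q\<close> by (simp add: poly_eq_0_iff_dvd)
  from assms(2) obtain c where
    "eventually (\<lambda>t. \<bar>poly P t\<bar> \<le> c * \<bar>(t - a)^(Suc N)\<bar>) (at a)"
    by (elim landau_o.bigE) auto
  moreover have "eventually (\<lambda>t. t \<noteq> a) (at a)"
    by (rule eventually_neq_at_within)
  ultimately have "eventually (\<lambda>t. norm (poly Q t) \<le> c * \<bar>t - a\<bar>^(Suc N - k)) (at a)"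
  proof eventually_elim
    case (elim t)
    have "\<bar>t - a\<bar>^(Suc N) = \<bar>t - a\<bar>^k * \<bar>t - a\<bar>^(Suc N - k)"
      using \<open>k \<le> N\<close> by (simp flip: power_add)
    then have "\<bar>t - a\<bar>^k * \<bar>poly Q t\<bar> \<le> \<bar>t - a\<bar>^k * (c * \<bar>t - a\<bar>^(Suc N - k))"
      using elim(1) by (simp add: P abs_mult power_abs ac_simps)
    then show ?case
      using elim(2) by simp
  qed
  moreover have "((\<lambda>t. c * \<bar>t - a\<bar>^(Suc N - k)) \<longlongrightarrow> c * \<bar>a - a\<bar>^(Suc N - k)) (at a)"
    by (intro tendsto_intros)
  then have "((\<lambda>t. c * \<bar>t - a\<bar>^(Suc N - k)) \<longlongrightarrow> 0) (at a)"
    using \<open>k \<le> N\<close> by (simp add: Suc_diff_le)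
  ultimately have "(poly Q \<longlongrightarrow> 0) (at a)"
    by (rule Lim_null_comparison)
  moreover have "(poly Q \<longlongrightarrow> poly Q a) (at a)"
    by (intro tendsto_intros)
  ultimately show False
    using \<open>poly Q a \<noteq> 0\<close> tendsto_unique[OF at_neq_bot] by blast
qed

lemma pade_ratio_unique:
  fixes R1 S1 R2 S2 :: "real poly"
  assumes "degree R1 \<le> m + 1" "degree S1 \<le> m" "\<forall>t>0. poly S1 t \<noteq> 0"
    and O1: "(\<lambda>t. ln t - poly R1 t / poly S1 t) \<in> O[at 1](\<lambda>t. (t - 1)^(2 * m + 2))"
    and "degree R2 \<le> m + 1" "degree S2 \<le> m" "\<forall>t>0. poly S2 t \<noteq> 0"
    and O2: "(\<lambda>t. ln t - poly R2 t / poly S2 t) \<in> O[at 1](\<lambda>t. (t - 1)^(2 * m + 2))"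
    and "t > 0"
  shows "poly R1 t / poly S1 t = poly R2 t / poly S2 t"
proof -
  define P where "P = R2 * S1 - R1 * S2"
  have "degree (R2 * S1) \<le> 2 * m + 1" "degree (R1 * S2) \<le> 2 * m + 1"
    using degree_mult_le[of R2 S1] degree_mult_le[of R1 S2] assms(1,2,5,6) by linarith+
  then have "degree P \<le> 2 * m + 1"
    unfolding P_def by (rule degree_diff_le)
  have "(\<lambda>t. poly S1 t * poly S2 t) \<in> O[at 1](\<lambda>_. 1)"
    by (rule bigoI_tendsto[where c = "poly S1 1 * poly S2 1"]) (auto intro!: tendsto_intros)
  with sum_in_bigo(2)[OF O1 O2]
  have diff_bigo: "(\<lambda>t. ((ln t - poly R1 t / poly S1 t) - (ln t - poly R2 t / poly S2 t))
      * (poly S1 t * poly S2 t)) \<in> O[at 1](\<lambda>t. (t - 1)^(2 * m + 2))"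
    by (rule landau_o.big_1_mult)
  have ev: "eventually (\<lambda>t. ((ln t - poly R1 t / poly S1 t) - (ln t - poly R2 t / poly S2 t))
      * (poly S1 t * poly S2 t) = poly P t) (at (1::real))"
  proof (rule eventually_mono)
    show "eventually (\<lambda>x. 0 < x) (at (1::real))"
      by (rule order_tendstoD(1)[OF tendsto_ident_at]) simp
  next
    fix x :: real
    assume "0 < x"
    then have "poly S1 x \<noteq> 0" "poly S2 x \<noteq> 0"
      using assms(3,7) by auto
    then show "((ln x - poly R1 x / poly S1 x) - (ln x - poly R2 x / poly S2 x))
        * (poly S1 x * poly S2 x) = poly P x"
      by (simp add: P_def field_simps)
  qed
  have "(\<lambda>t. poly P t) \<in> O[at 1](\<lambda>t. (t - 1)^(2 * m + 2))"
    using diff_bigo landau_o.big.in_cong[OF ev] by simp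
  then have "P = 0"
    using poly_eq_0_if_bigo_power[OF \<open>degree P \<le> 2 * m + 1\<close>] by simp
  then have "poly R2 t * poly S1 t = poly R1 t * poly S2 t"
    unfolding P_def by (metis eq_iff_diff_eq_0 poly_mult)
  then show ?thesis
    using assms(3,7,9) by (simp add: field_simps)
qed

lemma pade_log_eqI:
  assumes "degree R \<le> m + 1" "degree S \<le> m" "poly S 1 = 1" "\<forall>t>0. poly S t \<noteq> 0"
    and "(\<lambda>t. ln t - poly R t / poly S t) \<in> O[at 1](\<lambda>t. (t - 1)^(2 * m + 2))"
  shows "pade_log m = (\<lambda>t. if t > 0 then poly R t / poly S t else 0)"
  unfolding pade_log_def
proof (rule the_equality)
  show "\<exists>R' S' :: real poly. degree R' \<le> m + 1 \<and> degree S' \<le> m \<and> poly S' 1 = 1 \<and>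
      (\<forall>t>0. poly S' t \<noteq> 0) \<and>
      (\<lambda>t. ln t - poly R' t / poly S' t) \<in> O[at 1](\<lambda>t. (t - 1)^(2 * m + 2)) \<and>
      (\<lambda>t. if t > 0 then poly R t / poly S t else 0)
        = (\<lambda>t. if t > 0 then poly R' t / poly S' t else 0)"
    using assms by blast
next
  fix f
  assume "\<exists>R' S' :: real poly. degree R' \<le> m + 1 \<and> degree S' \<le> m \<and> poly S' 1 = 1 \<and>
      (\<forall>t>0. poly S' t \<noteq> 0) \<and>
      (\<lambda>t. ln t - poly R' t / poly S' t) \<in> O[at 1](\<lambda>t. (t - 1)^(2 * m + 2)) \<and>
      f = (\<lambda>t. if t > 0 then poly R' t / poly S' t else 0)"
  then obtain R' S' :: "real poly" where R'S': "degree R' \<le> m + 1" "degree S' \<le> m"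
      "\<forall>t>0. poly S' t \<noteq> 0" "(\<lambda>t. ln t - poly R' t / poly S' t) \<in> O[at 1](\<lambda>t. (t - 1)^(2 * m + 2))"
    and f: "f = (\<lambda>t. if t > 0 then poly R' t / poly S' t else 0)"
    by blast
  show "f = (\<lambda>t. if t > 0 then poly R t / poly S t else 0)"
    unfolding f using pade_ratio_unique[OF R'S' assms(1,2,4,5)] by auto
qed

text \<open>Since S(1) = C(2m+1,m), numerator and denominator are rescaled to meet the
  normalisation S(1) = 1 in the definition of pade_log.\<close>

lemma pade_log_eq:
  "pade_log m = (\<lambda>t. if t > 0 then poly (pade_num m) t / poly (pade_den m) t else 0)"
proof -
  define c where "c = 1 / poly (pade_den m) 1"
  have "1 \<le> poly (pade_den m) 1"
    by (simp add: pade_den_ge_one)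
  then have "c \<noteq> 0"
    by (simp add: c_def)
  have "pade_log m = (\<lambda>t. if t > 0 then poly (smult c (pade_num m)) t / poly (smult c (pade_den m)) t else 0)"
  proof (rule pade_log_eqI)
    show "degree (smult c (pade_num m)) \<le> m + 1" "degree (smult c (pade_den m)) \<le> m"
      using degree_pade_num degree_pade_den by (simp_all add: \<open>c \<noteq> 0\<close>)
    show "poly (smult c (pade_den m)) 1 = 1"
      using \<open>1 \<le> poly (pade_den m) 1\<close> by (simp add: c_def)
    show "\<forall>t>0. poly (smult c (pade_den m)) t \<noteq> 0"
      using \<open>c \<noteq> 0\<close> pade_den_ge_one by (smt (verit) less_imp_le mult_eq_0_iff poly_smult)
    show "(\<lambda>t. ln t - poly (smult c (pade_num m)) t / poly (smult c (pade_den m)) t)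
        \<in> O[at 1](\<lambda>t. (t - 1)^(2 * m + 2))"
      using pade_approximation_bigo[of m] \<open>c \<noteq> 0\<close> by simp
  qed
  then show ?thesis
    using \<open>c \<noteq> 0\<close> by (simp add: fun_eq_iff)
qed

section \<open>The Pade approximant exceeds the logarithm by O((t-1)^2/m)\<close>

lemma mult_power_one_minus_le:
  fixes a :: real
  assumes "0 \<le> a" "a \<le> 1" "1 \<le> K"
  shows "a * (1 - a)^K \<le> 1 / real K"
proof -
  have bernoulli: "(1 - a)^n * (1 + real n * a) \<le> 1" for n
  proof (induction n)
    case (Suc n)
    have "(1 - a)^(Suc n) * (1 + real (Suc n) * a) = (1 - a)^n * ((1 + real n * a) - (real n + 1) * a^2)"
      by (simp add: algebra_simps power2_eq_square)
    also have "\<dots> \<le> (1 - a)^n * (1 + real n * a)"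
      using assms(1,2) by (intro mult_left_mono) auto
    finally show ?case
      using Suc.IH by linarith
  qed simp
  have "real K * (a * (1 - a)^K) \<le> (1 - a)^K * (1 + real K * a)"
    using assms(1,2) by (simp add: algebra_simps)
  then have "real K * (a * (1 - a)^K) \<le> 1"
    using bernoulli[of K] by linarith
  then show ?thesis
    using assms(3) by (simp add: field_simps)
qed

lemma pade_excess_le_error:
  assumes "t > 0"
  shows "poly (pade_num m) t / poly (pade_den m) t - ln t
    \<le> \<bar>poly (pade_den m) t * ln t - poly (pade_num m) t\<bar> / poly (pade_den m) t"
proof -
  have "poly (pade_den m) t > 0"
    using pade_den_ge_one[of t m] assms by simp
  then have "poly (pade_num m) t / poly (pade_den m) t - ln t
      = - (poly (pade_den m) t * ln t - poly (pade_num m) t) / poly (pade_den m) t"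
    by (simp add: field_simps)
  also have "\<dots> \<le> \<bar>poly (pade_den m) t * ln t - poly (pade_num m) t\<bar> / poly (pade_den m) t"
    using \<open>poly (pade_den m) t > 0\<close> by (intro divide_right_mono) auto
  finally show ?thesis .
qed

lemma pade_error_below_one:
  assumes "0 < t" "t < 1"
  shows "\<bar>poly (pade_den m) t * ln t - poly (pade_num m) t\<bar> \<le> (1 - sqrt t)^(2 * m) * ((1 - t) / t)"
proof -
  obtain \<xi> where "t < \<xi>" "\<xi> < 1"
    and E: "\<bar>poly (pade_den m) t * ln t - poly (pade_num m) t\<bar>
      \<le> (sqrt t - 1)^(2 * m) * (\<bar>t - \<xi>\<bar> * \<bar>t - 1\<bar> / \<xi>^2)"
    using pade_error_bound[of t m] assms by (auto simp: min_def max_def)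
  have "\<bar>t - \<xi>\<bar> * \<bar>t - 1\<bar> / \<xi>^2 = (\<bar>t - \<xi>\<bar> / \<xi>) * (\<bar>t - 1\<bar> / \<xi>)"
    by (simp add: power2_eq_square)
  also have "\<dots> \<le> 1 * ((1 - t) / t)"
    using \<open>t < \<xi>\<close> \<open>\<xi> < 1\<close> assms(1) by (intro mult_mono) (auto simp: frac_le)
  finally have "(sqrt t - 1)^(2 * m) * (\<bar>t - \<xi>\<bar> * \<bar>t - 1\<bar> / \<xi>^2)
      \<le> (sqrt t - 1)^(2 * m) * ((1 - t) / t)"
    by (intro mult_left_mono) (simp_all add: power_mult)
  moreover have "(sqrt t - 1)^(2 * m) = (1 - sqrt t)^(2 * m)"
    by (simp add: power_mult power2_commute)
  ultimately show ?thesis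
    using E by simp
qed

lemma pade_excess_below_one:
  assumes "0 < t" "t < 1" "1 \<le> m"
  shows "t^2 * (poly (pade_num m) t / poly (pade_den m) t - ln t) \<le> (t - 1)^2 / (2 * real m - 1)"
proof -
  define E where "E = \<bar>poly (pade_den m) t * ln t - poly (pade_num m) t\<bar>"
  define a where "a = sqrt t"
  have a: "0 < a" "a < 1" "a^2 = t"
    using assms by (auto simp: a_def)
  have "t^2 * (poly (pade_num m) t / poly (pade_den m) t - ln t) \<le> t^2 * E"
  proof (rule mult_left_mono)
    have "1 \<le> poly (pade_den m) t"
      using assms by (simp add: pade_den_ge_one)
    then have "E / poly (pade_den m) t \<le> E"
      by (simp add: E_def divide_le_eq mult_le_cancel_left1)
    then show "poly (pade_num m) t / poly (pade_den m) t - ln t \<le> E"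
      using pade_excess_le_error[OF assms(1), of m] unfolding E_def by linarith
  qed simp
  also have "\<dots> \<le> t^2 * ((1 - a)^(2 * m) * ((1 - t) / t))"
    using pade_error_below_one[OF assms(1,2), of m] unfolding E_def a_def by (intro mult_left_mono) auto
  also have "\<dots> = (a * (1 - a)^(2 * m - 1)) * (a * (1 - a)) * (1 - t)"
  proof -
    have "(1 - a)^(2 * m) = (1 - a)^(2 * m - 1) * (1 - a)"
      using assms(3) by (simp flip: power_Suc2)
    moreover have "(a^2)^2 * (P * (1 - a) * ((1 - a^2) / a^2)) = (a * P) * (a * (1 - a)) * (1 - a^2)" for P
      using a(1) by (simp add: field_simps power2_eq_square)
    ultimately show ?thesis
      by (simp flip: a(3))
  qed
  also have "\<dots> \<le> (1 / real (2 * m - 1)) * (1 - t) * (1 - t)"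
  proof -
    have "a * (1 - a)^(2 * m - 1) \<le> 1 / real (2 * m - 1)"
      using a assms(3) by (intro mult_power_one_minus_le) auto
    moreover have "a * (1 - a) \<le> 1 - t"
      using a by (simp add: power2_eq_square algebra_simps)
    ultimately show ?thesis
      using a assms(2) by (intro mult_right_mono mult_mono) auto
  qed
  also have "\<dots> = (t - 1)^2 / (2 * real m - 1)"
    using assms(3) by (simp add: of_nat_diff power2_eq_square algebra_simps)
  finally show ?thesis .
qed

lemma pade_excess_above_one:
  assumes "1 < t"
  shows "poly (pade_num m) t / poly (pade_den m) t - ln t \<le> (t - 1)^2 / (real m + 1)"
proof -
  define E where "E = \<bar>poly (pade_den m) t * ln t - poly (pade_num m) t\<bar>"
  obtain \<xi> where "1 < \<xi>" "\<xi> < t"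
    and E: "E \<le> (sqrt t - 1)^(2 * m) * (\<bar>t - \<xi>\<bar> * \<bar>t - 1\<bar> / \<xi>^2)"
    using pade_error_bound[of t m] assms unfolding E_def by (auto simp: min_def max_def)
  have "1 \<le> \<xi>^2"
    using \<open>1 < \<xi>\<close> by (simp add: one_le_power)
  then have "\<bar>t - \<xi>\<bar> * \<bar>t - 1\<bar> / \<xi>^2 \<le> \<bar>t - \<xi>\<bar> * \<bar>t - 1\<bar> / 1"
    by (intro divide_left_mono) auto
  also have "\<dots> \<le> (t - 1)^2"
    using \<open>1 < \<xi>\<close> \<open>\<xi> < t\<close> by (simp add: power2_eq_square mult_right_mono)
  finally have "\<bar>t - \<xi>\<bar> * \<bar>t - 1\<bar> / \<xi>^2 \<le> (t - 1)^2" .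
  moreover have "(sqrt t - 1)^(2 * m) \<le> t^m"
  proof -
    have "(sqrt t - 1)^(2 * m) \<le> (sqrt t)^(2 * m)"
      using assms by (intro power_mono) auto
    then show ?thesis
      using assms by (simp add: power_mult)
  qed
  ultimately have "(sqrt t - 1)^(2 * m) * (\<bar>t - \<xi>\<bar> * \<bar>t - 1\<bar> / \<xi>^2) \<le> t^m * (t - 1)^2"
    using assms by (intro mult_mono) auto
  with E have "E \<le> t^m * (t - 1)^2"
    by linarith
  have "(real m + 1) * t^m \<le> poly (pade_den m) t"
    using assms by (simp add: pade_den_ge_leading)
  have "poly (pade_num m) t / poly (pade_den m) t - ln t \<le> E / poly (pade_den m) t"
    using pade_excess_le_error[of t m] assms unfolding E_def by simp
  also have "\<dots> \<le> (t^m * (t - 1)^2) / ((real m + 1) * t^m)"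
    using \<open>E \<le> t^m * (t - 1)^2\<close> \<open>(real m + 1) * t^m \<le> poly (pade_den m) t\<close> assms
    by (intro frac_le) (auto simp: E_def)
  also have "\<dots> = (t - 1)^2 / (real m + 1)"
    using assms by simp
  finally show ?thesis .
qed

lemma pade_log_excess_le:
  assumes "1 \<le> M" "0 < t" "t \<le> M" "1 \<le> m"
  shows "t^2 * (pade_log m t - ln t) \<le> M^2 / real m * (t - 1)^2"
proof -
  have pade_log: "pade_log m t = poly (pade_num m) t / poly (pade_den m) t"
    using assms(2) by (simp add: pade_log_eq)
  consider "t < 1" | "t = 1" | "1 < t"
    by linarith
  then show ?thesis
  proof cases
    case 1
    have "1 / (2 * real m - 1) \<le> 1 / real m"
      using assms(4) by (intro divide_left_mono) auto
    also have "\<dots> \<le> M^2 / real m"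
      using assms(1) by (intro divide_right_mono) (auto simp: one_le_power)
    finally have "1 / (2 * real m - 1) * (t - 1)^2 \<le> M^2 / real m * (t - 1)^2"
      by (intro mult_right_mono) auto
    then have "(t - 1)^2 / (2 * real m - 1) \<le> M^2 / real m * (t - 1)^2"
      by simp
    then show ?thesis
      using pade_excess_below_one[OF assms(2) 1 assms(4)] unfolding pade_log by linarith
  next
    case 2
    then show ?thesis
      unfolding pade_log by (simp add: poly_pade_num_1)
  next
    case 3
    have "t^2 * (pade_log m t - ln t) \<le> t^2 * ((t - 1)^2 / (real m + 1))"
      unfolding pade_log using pade_excess_above_one[OF 3, of m] by (intro mult_left_mono) auto
    also have "\<dots> \<le> M^2 * ((t - 1)^2 / (real m + 1))"
      using assms(2,3) by (intro mult_right_mono power_mono) auto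
    also have "\<dots> \<le> M^2 * ((t - 1)^2 / real m)"
      using assms(4) by (intro mult_left_mono divide_left_mono) auto
    finally show ?thesis
      by simp
  qed
qed

section \<open>A polynomial majorant of the logarithm\<close>

definition log_tail :: "nat \<Rightarrow> real \<Rightarrow> real" where
  "log_tail N v = - ln (1 - v) - (\<Sum>k<N. v^(Suc k) / real (Suc k))"

definition log_tail_deriv :: "nat \<Rightarrow> real \<Rightarrow> real" where
  "log_tail_deriv N v = v^N / (1 - v)"

definition log_tail_deriv2 :: "nat \<Rightarrow> real \<Rightarrow> real" where
  "log_tail_deriv2 N v = (real N * v^(N - 1) * (1 - v) + v^N) / (1 - v)^2"

lemma log_tail_0 [simp]: "log_tail N 0 = 0"
  by (simp add: log_tail_def)

lemma has_real_derivative_log_tail: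
  assumes "v < 1"
  shows "(log_tail N has_real_derivative log_tail_deriv N v) (at v)"
proof -
  have "((\<lambda>v. \<Sum>k<N. v^(Suc k) / real (Suc k)) has_real_derivative (\<Sum>k<N. v^k)) (at v)"
  proof (rule DERIV_sum)
    fix k
    show "((\<lambda>v. v^(Suc k) / real (Suc k)) has_real_derivative v^k) (at v)"
      using DERIV_cdivide[OF DERIV_pow[of "Suc k" v], of "real (Suc k)"] by simp
  qed
  moreover have "((\<lambda>v. - ln (1 - v)) has_real_derivative 1 / (1 - v)) (at v)"
    using assms by (auto intro!: derivative_eq_intros)
  ultimately have "((\<lambda>v. - ln (1 - v) - (\<Sum>k<N. v^(Suc k) / real (Suc k))) has_real_derivative
      1 / (1 - v) - (\<Sum>k<N. v^k)) (at v)"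
    by (rule DERIV_diff[rotated])
  moreover have "1 / (1 - v) - (\<Sum>k<N. v^k) = log_tail_deriv N v"
    using assms sum_gp_strict[of v N] by (simp add: log_tail_deriv_def field_simps)
  ultimately show ?thesis
    unfolding log_tail_def[abs_def] by simp
qed

lemma has_real_derivative_log_tail_deriv:
  assumes "v < 1"
  shows "(log_tail_deriv N has_real_derivative log_tail_deriv2 N v) (at v)"
proof -
  have "((\<lambda>v. v^N / (1 - v)) has_real_derivative
      (real N * v^(N - 1) * (1 - v) - v^N * (- 1)) / ((1 - v) * (1 - v))) (at v)"
    using assms by (auto intro!: derivative_eq_intros simp: algebra_simps)
  then show ?thesis
    unfolding log_tail_deriv_def[abs_def] log_tail_deriv2_def by (simp add: power2_eq_square)
qed

lemma log_tail_deriv2_nonneg: "0 \<le> v \<Longrightarrow> v < 1 \<Longrightarrow> 0 \<le> log_tail_deriv2 N v"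
  unfolding log_tail_deriv2_def by (intro divide_nonneg_nonneg add_nonneg_nonneg mult_nonneg_nonneg) auto

lemma log_tail_taylor:
  assumes "0 \<le> v" "v < 1" "0 \<le> c" "c < 1" "v \<noteq> c"
  obtains \<eta> where "min v c < \<eta>" "\<eta> < max v c"
    "log_tail N v = log_tail N c + log_tail_deriv N c * (v - c) + log_tail_deriv2 N \<eta> / 2 * (v - c)^2"
proof -
  define D where "D = (\<lambda>i::nat. if i = 0 then log_tail N else if i = 1 then log_tail_deriv N
    else log_tail_deriv2 N)"
  have "\<forall>i t. i < 2 \<and> 0 \<le> t \<and> t \<le> max v c \<longrightarrow> (D i has_real_derivative D (Suc i) t) (at t)"
    using assms has_real_derivative_log_tail has_real_derivative_log_tail_deriv
    by (auto simp: D_def less_2_cases_iff)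
  then obtain \<eta> where \<eta>: "if v < c then v < \<eta> \<and> \<eta> < c else c < \<eta> \<and> \<eta> < v"
    "log_tail N v = (\<Sum>i<2. D i c / fact i * (v - c)^i) + D 2 \<eta> / fact 2 * (v - c)^2"
    using Taylor[of 2 D "log_tail N" 0 "max v c" c v] assms unfolding D_def by auto
  show ?thesis
    using \<eta> by (intro that[of \<eta>]) (auto simp: D_def numeral_2_eq_2 split: if_splits)
qed

lemma log_tail_nonneg_le:
  assumes "0 \<le> v" "v < 1"
  shows "0 \<le> log_tail N v" "log_tail N v \<le> v^(Suc N) / (1 - v)"
proof -
  have "0 \<le> log_tail N v \<and> log_tail N v \<le> v^(Suc N) / (1 - v)"
  proof (cases "v = 0")
    case False
    obtain z where "0 < z" "z < v" and mvt: "log_tail N v - log_tail N 0 = (v - 0) * log_tail_deriv N z"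
      using MVT2[of 0 v "log_tail N" "log_tail_deriv N"] False assms has_real_derivative_log_tail
      by force
    have "0 \<le> log_tail_deriv N z"
      unfolding log_tail_deriv_def using \<open>0 < z\<close> \<open>z < v\<close> assms by simp
    moreover have "log_tail_deriv N z \<le> v^N / (1 - v)"
      unfolding log_tail_deriv_def using \<open>0 < z\<close> \<open>z < v\<close> assms by (intro frac_le power_mono) auto
    then have "v * log_tail_deriv N z \<le> v * (v^N / (1 - v))"
      using assms by (intro mult_left_mono) auto
    ultimately show ?thesis
      using mvt assms by simp
  qed simp
  then show "0 \<le> log_tail N v" "log_tail N v \<le> v^(Suc N) / (1 - v)"
    by simp_all
qed

text \<open>With v = 1 - t/M and c = 1 - 1/M (the value of v at t = 1) we have
  ln t = ln M - (sum over k < N of v^(k+1)/(k+1)) - log_tail N v; replacing log_tail N v by its tangent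
  at c gives a polynomial in t, which lies above ln t by convexity of log_tail N.\<close>

definition ln_majorant :: "real \<Rightarrow> nat \<Rightarrow> real poly" where
  "ln_majorant M N =
     [:ln M - log_tail N (1 - 1/M) + log_tail_deriv N (1 - 1/M) * (1 - 1/M):]
     - (\<Sum>k<N. smult (1 / real (Suc k)) ([:1, -1/M:]^(Suc k)))
     - smult (log_tail_deriv N (1 - 1/M)) [:1, -1/M:]"

lemma poly_ln_majorant_minus_ln:
  assumes "M > 0" "t > 0"
  shows "poly (ln_majorant M N) t - ln t = log_tail N (1 - t/M) - log_tail N (1 - 1/M)
    - log_tail_deriv N (1 - 1/M) * ((1 - t/M) - (1 - 1/M))"
proof -
  have "ln (1 - (1 - t/M)) = ln t - ln M"
    using assms by (simp add: ln_div)
  moreover have "poly (\<Sum>k<N. smult (1 / real (Suc k)) ([:1, -1/M:]^(Suc k))) t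
      = (\<Sum>k<N. (1 - t/M)^(Suc k) / real (Suc k))"
    unfolding poly_sum by (intro sum.cong refl) (simp add: poly_power del: power_Suc)
  ultimately show ?thesis
    unfolding ln_majorant_def log_tail_def by (simp add: algebra_simps)
qed

lemma power_le_of_le_one_minus_inverse:
  fixes M \<eta> :: real
  assumes "1 \<le> M" "0 \<le> \<eta>" "\<eta> \<le> 1 - 1 / (2 * M)" "1 \<le> j"
  shows "\<eta>^(2 * j) \<le> (2 * M / real j)^2"
proof -
  have "(1 - 1 / (2 * M))^j \<le> 2 * M / real j"
    using mult_power_one_minus_le[of "1 / (2 * M)" j] assms(1,4) by (simp add: field_simps)
  moreover have "\<eta>^j \<le> (1 - 1 / (2 * M))^j"
    using assms(2,3) by (simp add: power_mono)
  ultimately have "(\<eta>^j)^2 \<le> (2 * M / real j)^2"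
    using assms(2) by (intro power_mono) auto
  then show ?thesis
    by (simp add: power_mult mult.commute[of 2])
qed

lemma log_tail_deriv2_le:
  fixes M \<eta> :: real
  assumes "1 \<le> M" "0 \<le> \<eta>" "\<eta> \<le> 1 - 1 / (2 * M)" "1 \<le> j"
  shows "log_tail_deriv2 (2 * j + 1) \<eta> \<le> 64 * M^4 / real j"
proof -
  have "0 < 1 / (2 * M)"
    using assms(1) by auto
  then have "\<eta> < 1"
    using assms(3) by linarith
  have "log_tail_deriv2 (2 * j + 1) \<eta> \<le> real (2 * j + 2) * \<eta>^(2 * j) / (1 - \<eta>)^2"
  proof -
    have "real (2 * j + 1) * \<eta>^(2 * j) * (1 - \<eta>) + \<eta>^(2 * j + 1) \<le> real (2 * j + 2) * \<eta>^(2 * j)"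
      using assms(2) \<open>\<eta> < 1\<close> power_decreasing[of "2 * j" "2 * j + 1" \<eta>]
      by (simp add: algebra_simps mult_left_le)
    then show ?thesis
      unfolding log_tail_deriv2_def using \<open>\<eta> < 1\<close> by (intro divide_right_mono) auto
  qed
  also have "\<dots> \<le> real (2 * j + 2) * (2 * M / real j)^2 * (4 * M^2)"
  proof -
    have "(1 / (2 * M))^2 \<le> (1 - \<eta>)^2"
      using assms by (intro power_mono) auto
    then have "1 / (1 - \<eta>)^2 \<le> 1 / (1 / (2 * M))^2"
      using assms(1) \<open>\<eta> < 1\<close> by (intro divide_left_mono) auto
    then have "1 / (1 - \<eta>)^2 \<le> 4 * M^2"
      by (simp add: power2_eq_square)
    then show ?thesis
      using power_le_of_le_one_minus_inverse[OF assms] assms(2)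
      by (simp add: divide_inverse mult_mono mult_left_mono)
  qed
  also have "\<dots> = (real (2 * j + 2) / real j) * (16 * M^4 / real j)"
    using assms(4) by (simp add: field_simps power2_eq_square power4_eq_xxxx)
  also have "\<dots> \<le> 4 * (16 * M^4 / real j)"
    using assms(4) by (intro mult_right_mono) (auto simp: field_simps)
  finally show ?thesis
    by simp
qed

lemma ln_majorant_gap:
  assumes "1 \<le> M" "0 < t" "t \<le> M" "t \<noteq> 1"
  obtains \<eta> where "0 \<le> \<eta>" "\<eta> < max (1 - t/M) (1 - 1/M)"
    "poly (ln_majorant M N) t - ln t = log_tail_deriv2 N \<eta> / 2 * ((t - 1)^2 / M^2)"
proof -
  have bounds: "0 \<le> 1 - t/M" "1 - t/M < 1" "0 \<le> 1 - 1/M" "1 - 1/M < 1" "1 - t/M \<noteq> 1 - 1/M"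
    using assms by (auto simp: field_simps)
  then obtain \<eta> where \<eta>: "min (1 - t/M) (1 - 1/M) < \<eta>" "\<eta> < max (1 - t/M) (1 - 1/M)"
    and taylor: "log_tail N (1 - t/M) = log_tail N (1 - 1/M) + log_tail_deriv N (1 - 1/M) * ((1 - t/M) - (1 - 1/M))
      + log_tail_deriv2 N \<eta> / 2 * ((1 - t/M) - (1 - 1/M))^2"
    by (rule log_tail_taylor)
  have "((1 - t/M) - (1 - 1/M))^2 = (t - 1)^2 / M^2"
    using assms(1) by (simp add: field_simps power2_eq_square)
  moreover have "0 \<le> \<eta>"
    using \<eta>(1) bounds by linarith
  ultimately show ?thesis
    using that[OF _ \<eta>(2)] taylor poly_ln_majorant_minus_ln[of M t N] assms by simp
qed

lemma ln_le_ln_majorant: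
  assumes "1 \<le> M" "0 < t" "t \<le> M"
  shows "ln t \<le> poly (ln_majorant M N) t"
proof (cases "t = 1")
  case True
  then show ?thesis
    using poly_ln_majorant_minus_ln[of M t N] assms by simp
next
  case False
  then obtain \<eta> where "0 \<le> \<eta>" "\<eta> < max (1 - t/M) (1 - 1/M)"
    and gap: "poly (ln_majorant M N) t - ln t = log_tail_deriv2 N \<eta> / 2 * ((t - 1)^2 / M^2)"
    using ln_majorant_gap assms by blast
  moreover have "max (1 - t/M) (1 - 1/M) < 1"
    using assms by simp
  ultimately have "0 \<le> \<eta>" "\<eta> < 1"
    by linarith+
  then show ?thesis
    using gap log_tail_deriv2_nonneg[of \<eta> N] by (smt (verit) divide_nonneg_nonneg mult_nonneg_nonneg zero_le_power2)
qed

lemma ln_majorant_excess_le_near_one: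
  assumes "1 \<le> M" "1/2 \<le> t" "t \<le> M" "t \<noteq> 1" "1 \<le> j"
  shows "2 * t^2 * (poly (ln_majorant M (2 * j + 1)) t - ln t) \<le> 64 * M^4 / real j * (t - 1)^2"
proof -
  define N where "N = 2 * j + 1"
  have "0 < t"
    using assms(2) by linarith
  obtain \<eta> where "0 \<le> \<eta>" "\<eta> < max (1 - t/M) (1 - 1/M)"
    and gap: "poly (ln_majorant M N) t - ln t = log_tail_deriv2 N \<eta> / 2 * ((t - 1)^2 / M^2)"
    using ln_majorant_gap[OF assms(1) \<open>0 < t\<close> assms(3,4)] by blast
  moreover have "max (1 - t/M) (1 - 1/M) \<le> 1 - 1 / (2 * M)"
    using assms(1,2) by (auto simp: field_simps)
  ultimately have "0 \<le> \<eta>" "\<eta> \<le> 1 - 1 / (2 * M)"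
    by linarith+
  then have "log_tail_deriv2 N \<eta> \<le> 64 * M^4 / real j"
    unfolding N_def using assms(1,5) by (intro log_tail_deriv2_le)
  moreover have "0 \<le> log_tail_deriv2 N \<eta>"
  proof (rule log_tail_deriv2_nonneg[OF \<open>0 \<le> \<eta>\<close>])
    have "0 < 1 / (2 * M)"
      using assms(1) by simp
    then show "\<eta> < 1"
      using \<open>\<eta> \<le> 1 - 1 / (2 * M)\<close> by linarith
  qed
  ultimately have bound: "t^2 * log_tail_deriv2 N \<eta> * ((t - 1)^2 / M^2)
      \<le> M^2 * (64 * M^4 / real j) * ((t - 1)^2 / M^2)"
    using \<open>0 < t\<close> assms(3) by (intro mult_right_mono mult_mono power_mono) auto
  have "2 * t^2 * (poly (ln_majorant M N) t - ln t) = t^2 * log_tail_deriv2 N \<eta> * ((t - 1)^2 / M^2)"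
    unfolding gap by simp
  also have "\<dots> \<le> M^2 * (64 * M^4 / real j) * ((t - 1)^2 / M^2)"
    by (rule bound)
  also have "\<dots> = 64 * M^4 / real j * (t - 1)^2"
  proof -
    have "M \<noteq> 0"
      using assms(1) by simp
    then show ?thesis
      by simp
  qed
  finally show ?thesis
    unfolding N_def .
qed

text \<open>Near t = 0 the point v = 1 - t/M approaches 1, where the second derivative of the tail
  blows up. Instead, the excess is bounded by the tail itself, at most v^(N+1)/(1-v) = M v^(N+1)/t,
  and (t/M)(1 - t/M)^(N+1) \<le> 1/(N+1).\<close>

lemma ln_majorant_excess_le_near_zero:
  assumes "1 \<le> M" "0 < t" "t < 1/2" "1 \<le> j"
  shows "2 * t^2 * (poly (ln_majorant M (2 * j + 1)) t - ln t) \<le> 64 * M^4 / real j * (t - 1)^2"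
proof -
  define N where "N = 2 * j + 1"
  define v where "v = 1 - t/M"
  have "t < M"
    using assms by linarith
  then have v: "0 \<le> v" "v < 1" "1 - 1/M < v"
    using assms by (auto simp: v_def field_simps)
  have "0 \<le> log_tail N (1 - 1/M)" "0 \<le> log_tail_deriv N (1 - 1/M)"
    using assms(1) log_tail_nonneg_le(1)[of "1 - 1/M" N] by (auto simp: log_tail_deriv_def)
  moreover have "0 \<le> log_tail_deriv N (1 - 1/M) * (v - (1 - 1/M))"
    using \<open>0 \<le> log_tail_deriv N (1 - 1/M)\<close> v(3) by simp
  ultimately have "poly (ln_majorant M N) t - ln t \<le> log_tail N v"
    using poly_ln_majorant_minus_ln[of M t N] assms unfolding v_def by linarith
  also have "\<dots> \<le> v^(Suc N) / (1 - v)"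
    using log_tail_nonneg_le(2)[OF v(1,2)] .
  finally have "2 * t^2 * (poly (ln_majorant M N) t - ln t) \<le> 2 * t^2 * (v^(Suc N) / (1 - v))"
    by (rule mult_left_mono) simp
  also have "\<dots> = 2 * M^2 * ((t/M) * (1 - t/M)^(Suc N))"
    using assms by (simp add: v_def field_simps power2_eq_square)
  also have "\<dots> \<le> 2 * M^2 * (1 / real (Suc N))"
    using assms by (intro mult_left_mono mult_power_one_minus_le) auto
  also have "\<dots> \<le> 16 * M^4 / real j"
  proof -
    have "M^2 \<le> M^4"
      using assms(1) by (intro power_increasing) auto
    moreover have "0 \<le> M^4"
      by simp
    ultimately have "2 * M^2 / real (Suc N) \<le> 16 * M^4 / real j"
      using assms(4) unfolding N_def by (intro frac_le) linarith+
    then show ?thesis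
      by simp
  qed
  also have "\<dots> \<le> 64 * M^4 / real j * (t - 1)^2"
  proof -
    have "(1/2)^2 \<le> (1 - t)^2"
      using assms(3) by (intro power_mono) auto
    then have "1 \<le> 4 * (t - 1)^2"
      by (simp add: power2_commute power_divide)
    then have "16 * M^4 / real j * 1 \<le> 16 * M^4 / real j * (4 * (t - 1)^2)"
      by (intro mult_left_mono) auto
    then show ?thesis
      by simp
  qed
  finally show ?thesis
    unfolding N_def .
qed

lemma ln_majorant_excess_le:
  assumes "1 \<le> M" "0 < t" "t \<le> M" "1 \<le> j"
  shows "2 * t^2 * (poly (ln_majorant M (2 * j + 1)) t - ln t) \<le> 64 * M^4 / real j * (t - 1)^2"
proof -
  consider "t = 1" | "1/2 \<le> t" "t \<noteq> 1" | "t < 1/2"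
    by linarith
  then show ?thesis
  proof cases
    case 1
    then show ?thesis
      using poly_ln_majorant_minus_ln[of M t] assms by simp
  next
    case 2
    then show ?thesis
      using ln_majorant_excess_le_near_one assms by blast
  next
    case 3
    then show ?thesis
      using ln_majorant_excess_le_near_zero assms by blast
  qed
qed

section \<open>A polynomial between the Pade approximant and the entropy density\<close>

lemma power2_diff_one_le:
  fixes t :: real
  assumes "t > 0"
  shows "(t - 1)^2 \<le> t^2 * ln (t^2) + 1 - t^2"
proof -
  have "ln (1 / t) \<le> 1 / t - 1"
    using assms by (intro ln_le_minus_one) auto
  then have "t - 1 \<le> t * ln t"
    using assms by (simp add: ln_div field_simps)
  then have "t * (t - 1) \<le> t * (t * ln t)"
    using assms by (intro mult_left_mono) auto
  moreover have "ln (t^2) = 2 * ln t"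
    using assms by (simp add: ln_realpow)
  ultimately show ?thesis
    by (simp add: power2_eq_square algebra_simps)
qed

text \<open>The slack (\<epsilon>/2)(t-1)^2 absorbs both approximation errors, each at most (\<epsilon>/4)(t-1)^2
  once m \<ge> 8M^2/\<epsilon> and j \<ge> 256M^4/\<epsilon>.\<close>

definition entropy_poly :: "real \<Rightarrow> real \<Rightarrow> nat \<Rightarrow> real poly" where
  "entropy_poly \<epsilon> M j = smult 2 ([:0, 0, 1:] * ln_majorant M (2 * j + 1)) + smult (\<epsilon> / 2) ([:-1, 1:]^2)"

lemma poly_entropy_poly:
  "poly (entropy_poly \<epsilon> M j) t = 2 * t^2 * poly (ln_majorant M (2 * j + 1)) t + \<epsilon> / 2 * (t - 1)^2"
  unfolding entropy_poly_def by (simp add: power2_eq_square algebra_simps)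

lemma pade_log_le_entropy_poly:
  assumes "1 \<le> M" "0 < \<epsilon>" "1 \<le> m" "8 * M^2 \<le> \<epsilon> * real m" "1 \<le> j" "256 * M^4 \<le> \<epsilon> * real j"
    and "0 \<le> t" "t \<le> M"
  shows "2 * t^2 * pade_log m t \<le> poly (entropy_poly \<epsilon> M j) t"
proof (cases "t = 0")
  case False
  then have "0 < t"
    using assms(7) by simp
  have "2 * t^2 * (pade_log m t - ln t) \<le> 2 * (M^2 / real m) * (t - 1)^2"
    using pade_log_excess_le[OF assms(1) \<open>0 < t\<close> assms(8,3)] by simp
  also have "\<dots> \<le> \<epsilon> / 4 * (t - 1)^2"
    using assms(2,3,4) by (intro mult_right_mono) (auto simp: field_simps)
  finally have "2 * t^2 * pade_log m t - 2 * t^2 * ln t \<le> \<epsilon> / 4 * (t - 1)^2"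
    by (simp only: right_diff_distrib)
  moreover have "2 * t^2 * ln t \<le> 2 * t^2 * poly (ln_majorant M (2 * j + 1)) t"
    using ln_le_ln_majorant[OF assms(1) \<open>0 < t\<close> assms(8)] by (intro mult_left_mono) auto
  moreover have "0 \<le> \<epsilon> / 4 * (t - 1)^2"
    using assms(2) by simp
  ultimately show ?thesis
    unfolding poly_entropy_poly by linarith
qed (use assms(2) in \<open>simp add: poly_entropy_poly\<close>)

lemma entropy_poly_le:
  assumes "1 \<le> M" "0 < \<epsilon>" "1 \<le> j" "256 * M^4 \<le> \<epsilon> * real j" "0 \<le> t" "t \<le> M"
  shows "poly (entropy_poly \<epsilon> M j) t \<le> (1 + \<epsilon>) * (t^2 * ln (t^2)) + \<epsilon> * (1 - t^2)"
proof (cases "t = 0")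
  case False
  then have "0 < t"
    using assms(5) by simp
  have "2 * t^2 * (poly (ln_majorant M (2 * j + 1)) t - ln t) \<le> 64 * M^4 / real j * (t - 1)^2"
    using ln_majorant_excess_le[OF assms(1) \<open>0 < t\<close> assms(6,3)] .
  also have "\<dots> \<le> \<epsilon> / 4 * (t - 1)^2"
    using assms(2,3,4) by (intro mult_right_mono) (auto simp: field_simps)
  finally have "2 * t^2 * poly (ln_majorant M (2 * j + 1)) t - 2 * t^2 * ln t \<le> \<epsilon> / 4 * (t - 1)^2"
    by (simp only: right_diff_distrib)
  moreover have "t^2 * ln (t^2) = 2 * t^2 * ln t"
    using \<open>0 < t\<close> by (simp add: ln_realpow)
  moreover have "\<epsilon> * (t - 1)^2 \<le> \<epsilon> * (t^2 * ln (t^2) + 1 - t^2)"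
    using power2_diff_one_le[OF \<open>0 < t\<close>] assms(2) by (intro mult_left_mono) auto
  moreover have "0 \<le> \<epsilon> / 4 * (t - 1)^2"
    using assms(2) by simp
  moreover have "\<epsilon> / 2 * (t - 1)^2 = 2 * (\<epsilon> / 4 * (t - 1)^2)"
    and "\<epsilon> * (t - 1)^2 = 4 * (\<epsilon> / 4 * (t - 1)^2)"
    and "(1 + \<epsilon>) * (t^2 * ln (t^2)) + \<epsilon> * (1 - t^2)
      = t^2 * ln (t^2) + \<epsilon> * (t^2 * ln (t^2) + 1 - t^2)"
    by (simp_all add: algebra_simps)
  ultimately show ?thesis
    unfolding poly_entropy_poly by linarith
qed (use assms(2) in \<open>simp add: poly_entropy_poly\<close>)

lemma exists_poly_between_pade_log_and_entropy:
  fixes M \<epsilon> :: real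
  assumes "1 \<le> M" "0 < \<epsilon>"
  obtains m p where
    "\<And>t. 0 \<le> t \<Longrightarrow> t \<le> M \<Longrightarrow> 2 * t^2 * pade_log m t \<le> poly p t"
    "\<And>t. 0 \<le> t \<Longrightarrow> t \<le> M \<Longrightarrow> poly p t \<le> (1 + \<epsilon>) * (t^2 * ln (t^2)) + \<epsilon> * (1 - t^2)"
proof -
  define m where "m = nat \<lceil>8 * M^2 / \<epsilon>\<rceil> + 1"
  define j where "j = nat \<lceil>256 * M^4 / \<epsilon>\<rceil> + 1"
  have "8 * M^2 / \<epsilon> \<le> real m" "256 * M^4 / \<epsilon> \<le> real j"
    unfolding m_def j_def by linarith+
  then have "8 * M^2 \<le> \<epsilon> * real m" "256 * M^4 \<le> \<epsilon> * real j"
    using assms(2) by (simp_all add: field_simps)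
  moreover have "1 \<le> m" "1 \<le> j"
    by (simp_all add: m_def j_def)
  ultimately show ?thesis
    using that[of m "entropy_poly \<epsilon> M j"] pade_log_le_entropy_poly entropy_poly_le assms by blast
qed

lemma Min_weights_bounds:
  fixes \<pi> :: "nat \<Rightarrow> real"
  assumes "\<forall>i<n. \<pi> i > 0" "(\<Sum>i<n. \<pi> i) = 1"
  shows "0 < Min (\<pi> ` {..<n})" "Min (\<pi> ` {..<n}) \<le> 1"
proof -
  have "n \<noteq> 0"
    using assms(2) by (cases n) auto
  then have "Min (\<pi> ` {..<n}) \<in> \<pi> ` {..<n}"
    by (intro Min_in) auto
  then obtain i where "i < n" "Min (\<pi> ` {..<n}) = \<pi> i"
    by auto
  moreover have "\<pi> i \<le> (\<Sum>i<n. \<pi> i)"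
    using assms(1) \<open>i < n\<close> by (intro member_le_sum) auto
  ultimately show "0 < Min (\<pi> ` {..<n})" "Min (\<pi> ` {..<n}) \<le> 1"
    using assms by auto
qed

lemma pi_sphere_le_inverse_sqrt_Min:
  assumes "\<forall>i<n. \<pi> i > 0" "x \<in> pi_sphere n \<pi>" "i < n"
  shows "x i \<le> 1 / sqrt (Min (\<pi> ` {..<n}))"
proof -
  have "0 \<le> x i" and norm: "(\<Sum>k<n. \<pi> k * (x k)^2) = 1"
    using assms(2,3) by (auto simp: pi_sphere_def pi_norm2_def)
  have "Min (\<pi> ` {..<n}) \<le> \<pi> i"
    using assms(3) by simp
  moreover have "Min (\<pi> ` {..<n}) \<in> \<pi> ` {..<n}"
    using assms(3) by (intro Min_in) auto
  then have "0 < Min (\<pi> ` {..<n})"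
    using assms(1) by auto
  have "\<pi> i * (x i)^2 \<le> 1"
    unfolding norm[symmetric] using assms(1,3) by (intro member_le_sum) auto
  moreover have "Min (\<pi> ` {..<n}) * (x i)^2 \<le> \<pi> i * (x i)^2"
    using \<open>Min (\<pi> ` {..<n}) \<le> \<pi> i\<close> by (intro mult_right_mono) auto
  ultimately have "Min (\<pi> ` {..<n}) * (x i)^2 \<le> 1"
    by linarith
  then have "sqrt ((x i)^2) \<le> sqrt (1 / Min (\<pi> ` {..<n}))"
    using \<open>0 < Min (\<pi> ` {..<n})\<close> by (intro real_sqrt_le_mono) (simp add: field_simps)
  then show ?thesis
    using \<open>0 \<le> x i\<close> by (simp add: real_sqrt_divide)
qed

lemma sum_le_entropy_if_pointwise_le:
  fixes f :: "real \<Rightarrow> real"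
  assumes "\<forall>i<n. \<pi> i > 0" "(\<Sum>i<n. \<pi> i) = 1" "x \<in> pi_sphere n \<pi>"
    and "\<And>i. i < n \<Longrightarrow> f (x i) \<le> (1 + \<epsilon>) * ((x i)^2 * ln ((x i)^2)) + \<epsilon> * (1 - (x i)^2)"
  shows "(\<Sum>i<n. \<pi> i * f (x i)) \<le> (1 + \<epsilon>) * ent_sq n \<pi> x"
proof -
  have norm: "pi_norm2 n \<pi> x = 1"
    using assms(3) by (simp add: pi_sphere_def)
  have "(\<Sum>i<n. \<pi> i * f (x i))
      \<le> (\<Sum>i<n. \<pi> i * ((1 + \<epsilon>) * ((x i)^2 * ln ((x i)^2)) + \<epsilon> * (1 - (x i)^2)))"
    using assms(1,4) by (intro sum_mono mult_left_mono) auto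
  also have "\<dots> = (1 + \<epsilon>) * (\<Sum>i<n. \<pi> i * (x i)^2 * ln ((x i)^2))
      + \<epsilon> * ((\<Sum>i<n. \<pi> i) - (\<Sum>i<n. \<pi> i * (x i)^2))"
    by (simp add: sum.distrib sum_subtractf sum_distrib_left algebra_simps)
  also have "\<dots> = (1 + \<epsilon>) * ent_sq n \<pi> x"
    using assms(2) norm by (simp add: ent_sq_def pi_norm2_def)
  finally show ?thesis .
qed

theorem mainTheorem4:
  fixes n :: nat and \<pi> :: "nat \<Rightarrow> real" and \<epsilon> :: real
  assumes pos: "\<forall>i<n. \<pi> i > 0"
    and sum1: "(\<Sum>i<n. \<pi> i) = 1"
    and eps: "0 < \<epsilon>" "\<epsilon> < 1"
  shows "\<exists>(m::nat) (p::real poly).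
           (\<forall>t. 0 \<le> t \<and> t \<le> 1 / sqrt (Min (\<pi> ` {..<n})) \<longrightarrow>
                 poly p t \<ge> 2 * t\<^sup>2 * pade_log m t) \<and>
           (\<forall>x\<in>pi_sphere n \<pi>.
                 (\<Sum>i<n. \<pi> i * poly p (x i)) \<le> (1 + \<epsilon>) * ent_sq n \<pi> x)"
proof -
  define M where "M = 1 / sqrt (Min (\<pi> ` {..<n}))"
  have "1 \<le> M"
    using Min_weights_bounds[OF pos sum1] by (simp add: M_def)
  then obtain m p where
    lower: "\<And>t. 0 \<le> t \<Longrightarrow> t \<le> M \<Longrightarrow> 2 * t^2 * pade_log m t \<le> poly p t" and
    upper: "\<And>t. 0 \<le> t \<Longrightarrow> t \<le> M \<Longrightarrow> poly p t \<le> (1 + \<epsilon>) * (t^2 * ln (t^2)) + \<epsilon> * (1 - t^2)"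
    using exists_poly_between_pade_log_and_entropy eps(1) by blast
  have "(\<Sum>i<n. \<pi> i * poly p (x i)) \<le> (1 + \<epsilon>) * ent_sq n \<pi> x" if "x \<in> pi_sphere n \<pi>" for x
    using pos sum1 that
  proof (rule sum_le_entropy_if_pointwise_le)
    fix i
    assume "i < n"
    then show "poly p (x i) \<le> (1 + \<epsilon>) * ((x i)^2 * ln ((x i)^2)) + \<epsilon> * (1 - (x i)^2)"
      using that pi_sphere_le_inverse_sqrt_Min[OF pos that] by (intro upper) (auto simp: pi_sphere_def M_def)
  qed
  then show ?thesis
    using lower unfolding M_def by blast
qed

end
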